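(* Let $\gamma$ be a positive integer and let $$G=\Bigl\langle a,b\,\Bigm|\, a^{2^{\gamma+1}}=b^{2^{\gamma+1}}=[a,b]^{2^{\gamma}}=[a,b,a]=[a,b,b]=e,\ a^{2^{\gamma}}=b^{2^{\gamma}}=[a,b]^{2^{\gamma-1}}\Bigr\rangle.$$ Then $G$ is not capable.
   Context: A group $G$ is called capable if there exists a group $K$ such that $K/Z(K)\cong G$. Commutators are $[x,y]=x^{-1}y^{-1}xy$, left-normed: $[x,y,z]=[[x,y],z]$. *)

theory Defs
  imports "HOL-Algebra.Algebra"
begin

definition center :: "('a, 'b) monoid_scheme \<Rightarrow> 'a set" where
  "center G = {z \<in> carrier G. \<forall>x\<in>carrier G. z \<otimes>\<^bsub>G\<^esub> x = x \<otimes>\<^bsub>G\<^esub> z}"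

definition commutator :: "('a, 'b) monoid_scheme \<Rightarrow> 'a \<Rightarrow> 'a \<Rightarrow> 'a" where
  "commutator G x y = inv\<^bsub>G\<^esub> x \<otimes>\<^bsub>G\<^esub> inv\<^bsub>G\<^esub> y \<otimes>\<^bsub>G\<^esub> x \<otimes>\<^bsub>G\<^esub> y"

(* G is capable iff G = K/Z(K) for some group K (K's element type is a parameter;
   the theorem quantifies over it universally) *)
definition capable_via :: "('k, 'c) monoid_scheme \<Rightarrow> ('a, 'b) monoid_scheme \<Rightarrow> bool" where
  "capable_via K G \<longleftrightarrow> group K \<and> (K Mod center K) \<cong> G"

definition rels :: "nat \<Rightarrow> ('a, 'b) monoid_scheme \<Rightarrow> 'a \<Rightarrow> 'a \<Rightarrow> bool" where
  "rels \<gamma> H x y \<longleftrightarrow>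
     x [^]\<^bsub>H\<^esub> ((2::nat) ^ (\<gamma> + 1)) = \<one>\<^bsub>H\<^esub> \<and>
     y [^]\<^bsub>H\<^esub> ((2::nat) ^ (\<gamma> + 1)) = \<one>\<^bsub>H\<^esub> \<and>
     commutator H x y [^]\<^bsub>H\<^esub> ((2::nat) ^ \<gamma>) = \<one>\<^bsub>H\<^esub> \<and>
     commutator H (commutator H x y) x = \<one>\<^bsub>H\<^esub> \<and>
     commutator H (commutator H x y) y = \<one>\<^bsub>H\<^esub> \<and>
     x [^]\<^bsub>H\<^esub> ((2::nat) ^ \<gamma>) = y [^]\<^bsub>H\<^esub> ((2::nat) ^ \<gamma>) \<and>
     y [^]\<^bsub>H\<^esub> ((2::nat) ^ \<gamma>) = commutator H x y [^]\<^bsub>H\<^esub> ((2::nat) ^ (\<gamma> - 1))"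

(* G with distinguished elements a, b is (isomorphic to) the group presented by
   <a,b | rels>: G is a group generated by a,b satisfying the relations, and it has
   the universal property with respect to every group satisfying the relations.
   Since the presented group is countable (2-generated), testing the universal property
   on groups whose elements are natural numbers already characterises it up to
   isomorphism. *)
definition presented_by_rels :: "nat \<Rightarrow> ('a, 'b) monoid_scheme \<Rightarrow> 'a \<Rightarrow> 'a \<Rightarrow> bool" where
  "presented_by_rels \<gamma> G a b \<longleftrightarrow>
     group G \<and> a \<in> carrier G \<and> b \<in> carrier G \<and>
     generate G {a, b} = carrier G \<and> rels \<gamma> G a b \<and>
     (\<forall>(H :: nat monoid) x y. group H \<and> x \<in> carrier H \<and> y \<in> carrier H \<and> rels \<gamma> H x y
        \<longrightarrow> (\<exists>h \<in> hom G H. h a = x \<and> h b = y))"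

end

theory Submission
  imports Defs "HOL-Library.Countable_Set"
begin

(* Suppose G = K/Z(K) is generated by a and b with a^n = b^n, and lift a, b to x, y in K.
   Then x^n y^-n is central, so x^n commutes with x and with y; as K is generated by x, y
   and Z(K), x^n is central and a^n = 1. For n = 2^gamma the relations give a^n = b^n, but
   a^n is not trivial: the relations hold in a quotient of the integral Heisenberg group in
   which the image of (1, 0, 0) has order 2^(gamma+1), and G maps onto it by its universal
   property. *)

definition centralizer :: "('a, 'b) monoid_scheme \<Rightarrow> 'a \<Rightarrow> 'a set" where
  "centralizer G u = {k \<in> carrier G. u \<otimes>\<^bsub>G\<^esub> k = k \<otimes>\<^bsub>G\<^esub> u}"

lemma (in group) commute_inv:
  assumes "u \<in> carrier G" "a \<in> carrier G" "u \<otimes> a = a \<otimes> u"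
  shows "u \<otimes> inv a = inv a \<otimes> u"
proof -
  have "a \<otimes> (u \<otimes> inv a) = u \<otimes> a \<otimes> inv a"
    using assms by (simp add: m_assoc)
  also have "\<dots> = u"
    using assms(1,2) by (simp add: m_assoc)
  finally show ?thesis
    using assms(1,2) by (simp add: inv_solve_left)
qed

lemma (in group) commute_mult:
  assumes "u \<in> carrier G" "a \<in> carrier G" "b \<in> carrier G"
    and "u \<otimes> a = a \<otimes> u" "u \<otimes> b = b \<otimes> u"
  shows "u \<otimes> (a \<otimes> b) = a \<otimes> b \<otimes> u"
proof -
  have "u \<otimes> (a \<otimes> b) = u \<otimes> a \<otimes> b"
    using assms(1-3) by (simp add: m_assoc)
  also have "\<dots> = a \<otimes> b \<otimes> u"
    using assms by (simp add: m_assoc)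
  finally show ?thesis .
qed

lemma (in group) subgroup_centralizer:
  assumes "u \<in> carrier G"
  shows "subgroup (centralizer G u) G"
  using assms by (intro subgroupI) (auto simp: centralizer_def commute_inv commute_mult)

lemma (in group) center_eq_Inter_centralizer: "center G = \<Inter> (centralizer G ` carrier G)"
  unfolding center_def centralizer_def by auto

lemma (in group) normal_center: "center G \<lhd> G"
proof -
  have sub: "subgroup (center G) G"
    unfolding center_eq_Inter_centralizer
    by (rule subgroups_Inter) (auto intro: subgroup_centralizer)
  show ?thesis
    unfolding normal_inv_iff
  proof (intro conjI sub ballI)
    fix x h assume x: "x \<in> carrier G" and h: "h \<in> center G"
    then have "x \<otimes> h = h \<otimes> x" and "h \<in> carrier G"
      unfolding center_def by auto
    then have "x \<otimes> h \<otimes> inv x = h \<otimes> (x \<otimes> inv x)"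
      using x by (simp add: m_assoc)
    then have "x \<otimes> h \<otimes> inv x = h"
      using x \<open>h \<in> carrier G\<close> by simp
    then show "x \<otimes> h \<otimes> inv x \<in> center G"
      using h by simp
  qed
qed

lemma (in group_hom) central_if_commutes_with_lifts_of_generators:
  assumes kernel: "kernel G H h \<subseteq> center G" and surj: "h ` carrier G = carrier H"
    and gen: "generate H S = carrier H" and u: "u \<in> carrier G"
    and lifts: "S \<subseteq> h ` centralizer G u"
  shows "u \<in> center G"
proof -
  have onto: "carrier H \<subseteq> h ` centralizer G u"
    using H.generate_subgroup_incl[OF lifts subgroup_img_is_subgroup[OF G.subgroup_centralizer[OF u]]]
    by (simp add: gen)
  have "u \<otimes> k = k \<otimes> u" if k: "k \<in> carrier G" for k
  proof -
    have "h k \<in> h ` centralizer G u"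
      using onto k by auto
    then obtain s where s: "s \<in> centralizer G u" "h k = h s"
      by blast
    have sc: "s \<in> carrier G" and us: "u \<otimes> s = s \<otimes> u"
      using s(1) by (auto simp: centralizer_def)
    define w where "w = k \<otimes> inv s"
    have "w \<in> kernel G H h"
      using s(2) sc k by (simp add: w_def kernel_def)
    then have "w \<in> center G"
      using kernel by blast
    then have wc: "w \<in> carrier G" and uw: "u \<otimes> w = w \<otimes> u"
      using u by (auto simp: center_def)
    have "k = w \<otimes> s"
      using sc k by (simp add: w_def G.m_assoc)
    then show ?thesis
      using G.commute_mult[OF u wc sc uw us] by simp
  qed
  then show ?thesis
    using u by (auto simp: center_def)
qed

lemma (in group_hom) pow_eq_imp_pow_eq_one:
  assumes kernel: "kernel G H h = center G" and surj: "h ` carrier G = carrier H"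
    and gen: "generate H {a, b} = carrier H" and a: "a \<in> carrier H" and b: "b \<in> carrier H"
    and ab: "a [^]\<^bsub>H\<^esub> (m::nat) = b [^]\<^bsub>H\<^esub> m"
  shows "a [^]\<^bsub>H\<^esub> m = \<one>\<^bsub>H\<^esub>"
proof -
  obtain x y where x: "x \<in> carrier G" "h x = a" and y: "y \<in> carrier G" "h y = b"
    using a b surj by (metis imageE)
  define u v where "u = x [^] m" and "v = y [^] m"
  have uc: "u \<in> carrier G" and vc: "v \<in> carrier G"
    using x y by (simp_all add: u_def v_def)
  define z where "z = u \<otimes> inv v"
  have "z \<in> kernel G H h"
    using a b x y uc vc ab by (simp add: z_def u_def v_def kernel_def hom_nat_pow)
  then have zc: "z \<in> carrier G" and yz: "y \<otimes> z = z \<otimes> y"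
    using kernel y by (auto simp: center_def)
  have yv: "y \<otimes> v = v \<otimes> y"
    using y G.nat_pow_comm[of y 1 m] by (simp add: v_def)
  have "u = z \<otimes> v"
    using uc vc by (simp add: z_def G.m_assoc)
  then have uy: "y \<in> centralizer G u"
    using G.commute_mult[OF y(1) zc vc yz yv] y by (simp add: centralizer_def)
  have ux: "x \<in> centralizer G u"
    using x G.nat_pow_comm[of x m 1] by (simp add: u_def centralizer_def)
  have "u \<in> center G"
    using ux uy x y
    by (intro central_if_commutes_with_lifts_of_generators[OF _ surj gen uc]) (auto simp: kernel)
  then have "h u = \<one>\<^bsub>H\<^esub>"
    using kernel[symmetric] by (simp add: kernel_def)
  then show ?thesis
    using x by (simp add: u_def hom_nat_pow)
qed

lemma Mod_center_iso_imp_central_epimorphism: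
  assumes K: "group K" and G: "group G" and \<phi>: "\<phi> \<in> iso (K Mod center K) G"
  defines "\<psi> \<equiv> \<phi> \<circ> r_coset K (center K)"
  shows "group_hom K G \<psi>" "kernel K G \<psi> = center K" "\<psi> ` carrier K = carrier G"
proof -
  interpret K: group K by (rule K)
  interpret Z: normal "center K" K by (rule K.normal_center)
  have \<phi>_hom: "\<phi> \<in> hom (K Mod center K) G"
    and \<phi>_bij: "bij_betw \<phi> (carrier (K Mod center K)) (carrier G)"
    using \<phi> by (auto simp: iso_def)
  interpret \<phi>: group_hom "K Mod center K" G \<phi>
    using Z.factorgroup_is_group G \<phi>_hom by (simp add: group_hom_def group_hom_axioms_def)
  have \<psi>_hom: "\<psi> \<in> hom K G"
    unfolding \<psi>_def by (rule hom_compose[OF Z.r_coset_hom_Mod \<phi>_hom])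
  then show "group_hom K G \<psi>"
    using K G by (simp add: group_hom_def group_hom_axioms_def)
  show "\<psi> ` carrier K = carrier G"
    using \<phi>_bij by (simp add: \<psi>_def bij_betw_def image_image carrier_FactGroup)
  have "\<psi> k = \<one>\<^bsub>G\<^esub> \<longleftrightarrow> k \<in> center K" if k: "k \<in> carrier K" for k
  proof -
    have "center K \<in> carrier (K Mod center K)" "center K #>\<^bsub>K\<^esub> k \<in> carrier (K Mod center K)"
      using \<phi>.G.one_closed k by (auto simp: carrier_FactGroup)
    then have "\<psi> k = \<one>\<^bsub>G\<^esub> \<longleftrightarrow> center K #>\<^bsub>K\<^esub> k = center K"
      using \<phi>_bij \<phi>.hom_one by (auto simp: \<psi>_def bij_betw_def inj_on_def)
    also have "\<dots> \<longleftrightarrow> k \<in> center K"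
      using k Z.rcos_const[OF K] K.rcos_self[OF k Z.subgroup_axioms] by auto
    finally show ?thesis .
  qed
  then show "kernel K G \<psi> = center K"
    using Z.subset by (auto simp: kernel_def)
qed

lemma capable_via_two_generated_pow_eq_imp_one:
  assumes cap: "capable_via K G" and G: "group G"
    and gen: "generate G {a, b} = carrier G" and "a \<in> carrier G" "b \<in> carrier G"
    and "a [^]\<^bsub>G\<^esub> (m::nat) = b [^]\<^bsub>G\<^esub> m"
  shows "a [^]\<^bsub>G\<^esub> m = \<one>\<^bsub>G\<^esub>"
proof -
  obtain \<phi> where K: "group K" and \<phi>: "\<phi> \<in> iso (K Mod center K) G"
    using cap by (auto simp: capable_via_def is_iso_def)
  note \<psi> = Mod_center_iso_imp_central_epimorphism[OF K G \<phi>]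
  show ?thesis
    by (rule group_hom.pow_eq_imp_pow_eq_one[OF \<psi>(1,2,3) gen]) fact+
qed

lemma commutator_closed [simp]:
  "group G \<Longrightarrow> x \<in> carrier G \<Longrightarrow> y \<in> carrier G \<Longrightarrow> commutator G x y \<in> carrier G"
  by (simp add: commutator_def group.inv_closed group.is_monoid monoid.m_closed)

lemma (in group_hom) hom_commutator:
  "x \<in> carrier G \<Longrightarrow> y \<in> carrier G \<Longrightarrow> h (commutator G x y) = commutator H (h x) (h y)"
  by (simp add: commutator_def)

lemma (in group_hom) rels_hom:
  assumes "x \<in> carrier G" "y \<in> carrier G" "rels \<gamma> G x y"
  shows "rels \<gamma> H (h x) (h y)"
  using assms
  by (simp add: rels_def hom_commutator[symmetric] hom_nat_pow[symmetric] G.is_group)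

lemma countable_group_iso_nat_monoid:
  assumes Q: "group Q" and countable: "countable (carrier Q)"
  shows "\<exists>(H :: nat monoid) f. group H \<and> f \<in> iso Q H"
proof -
  define f where "f = to_nat_on (carrier Q)"
  define g where "g = inv_into (carrier Q) f"
  have inj: "inj_on f (carrier Q)"
    using countable by (simp add: f_def inj_on_to_nat_on)
  define H :: "nat monoid"
    where "H = \<lparr>carrier = f ` carrier Q,
      monoid.mult = (\<lambda>u v. f (g u \<otimes>\<^bsub>Q\<^esub> g v)), one = f \<one>\<^bsub>Q\<^esub>\<rparr>"
  have hom: "f \<in> hom Q H"
    using inj group.is_monoid[OF Q] by (auto simp: hom_def H_def g_def monoid.m_closed)
  then have iso: "f \<in> iso Q H"
    using inj by (simp add: iso_def bij_betw_def H_def)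
  have "monoid (H\<lparr>carrier := f ` carrier Q, one := f \<one>\<^bsub>Q\<^esub>\<rparr>)"
    by (rule monoid.hom_imp_img_monoid[OF group.is_monoid[OF Q] hom])
  then have "monoid H"
    by (simp add: H_def)
  then have "group H"
    by (rule group.iso_imp_group[OF Q is_isoI[OF iso]])
  with iso show ?thesis
    by blast
qed

lemma presented_by_rels_hom_countable:
  assumes G: "presented_by_rels \<gamma> G a b" and Q: "group Q" and countable: "countable (carrier Q)"
    and x: "x \<in> carrier Q" and y: "y \<in> carrier Q" and rels: "rels \<gamma> Q x y"
  shows "\<exists>h \<in> hom G Q. h a = x \<and> h b = y"
proof -
  obtain H :: "nat monoid" and f where H: "group H" and f: "f \<in> iso Q H"
    using countable_group_iso_nat_monoid[OF Q countable] by blast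
  interpret f: group_hom Q H f
    using Q H f by (simp add: group_hom_def group_hom_axioms_def iso_def)
  have universal: "\<And>(H :: nat monoid) x y. group H \<Longrightarrow> x \<in> carrier H \<Longrightarrow> y \<in> carrier H
      \<Longrightarrow> rels \<gamma> H x y \<Longrightarrow> \<exists>h \<in> hom G H. h a = x \<and> h b = y"
    using G unfolding presented_by_rels_def by blast
  obtain h where h: "h \<in> hom G H" "h a = f x" "h b = f y"
    using universal[OF H f.hom_closed[OF x] f.hom_closed[OF y] f.rels_hom[OF x y rels]] by blast
  define f' where "f' = inv_into (carrier Q) f"
  have "f' \<in> hom H Q"
    using group.iso_set_sym[OF Q f] by (simp add: f'_def iso_def)
  moreover have "f' (f x) = x" "f' (f y) = y"
    using f x y by (simp_all add: f'_def iso_def bij_betw_def)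
  ultimately show ?thesis
    using h by (intro bexI[of _ "f' \<circ> h"]) (auto intro: hom_compose)
qed

lemma (in normal) rcos_eq_iff:
  assumes "group G" "u \<in> carrier G" "v \<in> carrier G"
  shows "H #> u = H #> v \<longleftrightarrow> u \<otimes> inv v \<in> H"
  using assms rcos_module[of v u] group.rcos_self[OF assms(1) assms(2) subgroup_axioms]
    group.repr_independence[OF assms(1) _ assms(3) subgroup_axioms, of u]
  by auto

(* (i, j, k) stands for x^i y^j [x,y]^-k with x = (1, 0, 0) and y = (0, 1, 0). *)
definition heisenberg :: "(int \<times> int \<times> int) monoid" where
  "heisenberg = \<lparr>carrier = UNIV,
     monoid.mult = (\<lambda>(i, j, k) (i', j', k'). (i + i', j + j', k + k' + j * i')), one = (0, 0, 0)\<rparr>"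

lemma heisenberg_simps [simp]:
  "carrier heisenberg = UNIV"
  "\<one>\<^bsub>heisenberg\<^esub> = (0, 0, 0)"
  "(i, j, k) \<otimes>\<^bsub>heisenberg\<^esub> (i', j', k') = (i + i', j + j', k + k' + j * i')"
  by (simp_all add: heisenberg_def)

lemma group_heisenberg: "group heisenberg"
proof (rule groupI)
  fix x y z :: "int \<times> int \<times> int"
  show "x \<otimes>\<^bsub>heisenberg\<^esub> y \<otimes>\<^bsub>heisenberg\<^esub> z = x \<otimes>\<^bsub>heisenberg\<^esub> (y \<otimes>\<^bsub>heisenberg\<^esub> z)"
    by (cases x; cases y; cases z) (simp add: algebra_simps)
  obtain i j k where "x = (i, j, k)"
    by (cases x)
  then show "\<exists>y\<in>carrier heisenberg. y \<otimes>\<^bsub>heisenberg\<^esub> x = \<one>\<^bsub>heisenberg\<^esub>"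
    by (intro bexI[of _ "(- i, - j, i * j - k)"]) (auto simp: algebra_simps)
qed auto

lemma heisenberg_inv [simp]: "inv\<^bsub>heisenberg\<^esub> (i, j, k) = (- i, - j, i * j - k)"
  by (rule group.inv_equality[OF group_heisenberg]) (auto simp: algebra_simps)

(* For even n this is the normal closure of x^n [x,y]^(-n/2), y^n [x,y]^(-n/2) and [x,y]^n. *)
definition heisenberg_relators :: "int \<Rightarrow> (int \<times> int \<times> int) set" where
  "heisenberg_relators n = {(i, j, k). n dvd i \<and> n dvd j \<and> 2 * n dvd 2 * k - i - j}"

lemma double_dvd_double_mult: "(n::int) dvd a \<Longrightarrow> 2 * n dvd 2 * (a * b)"
  by (simp add: mult_dvd_mono)

lemma normal_heisenberg_relators: "heisenberg_relators n \<lhd> heisenberg"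
proof -
  interpret group heisenberg
    by (rule group_heisenberg)
  have sub: "subgroup (heisenberg_relators n) heisenberg"
  proof (rule subgroupI)
    have "(0, 0, 0) \<in> heisenberg_relators n"
      by (simp add: heisenberg_relators_def)
    then show "heisenberg_relators n \<noteq> {}"
      by blast
  next
    fix u assume "u \<in> heisenberg_relators n"
    then obtain i j k where "u = (i, j, k)"
      and "n dvd i" "n dvd j" "2 * n dvd 2 * k - i - j"
      by (auto simp: heisenberg_relators_def)
    moreover have "2 * (i * j - k) - - i - - j = 2 * (i * j) - (2 * k - i - j)"
      by (simp add: algebra_simps)
    ultimately show "inv\<^bsub>heisenberg\<^esub> u \<in> heisenberg_relators n"
      unfolding heisenberg_relators_def
      by (simp only: heisenberg_inv mem_Collect_eq split) (simp add: double_dvd_double_mult dvd_diff)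
  next
    fix u v assume "u \<in> heisenberg_relators n" "v \<in> heisenberg_relators n"
    then obtain i j k i' j' k' where "u = (i, j, k)" "v = (i', j', k')"
      and "n dvd i" "n dvd j" "2 * n dvd 2 * k - i - j"
      and "n dvd i'" "n dvd j'" "2 * n dvd 2 * k' - i' - j'"
      by (auto simp: heisenberg_relators_def)
    moreover have "2 * (k + k' + j * i') - (i + i') - (j + j')
        = (2 * k - i - j) + (2 * k' - i' - j') + 2 * (j * i')"
      by (simp add: algebra_simps)
    ultimately show "u \<otimes>\<^bsub>heisenberg\<^esub> v \<in> heisenberg_relators n"
      unfolding heisenberg_relators_def
      by (simp only: heisenberg_simps mem_Collect_eq split) (simp add: double_dvd_double_mult dvd_add)
  qed (simp add: heisenberg_relators_def)
  show ?thesis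
    unfolding normal_inv_iff
  proof (intro conjI sub ballI)
    fix u v assume "u \<in> carrier heisenberg" "v \<in> heisenberg_relators n"
    obtain p q r where u: "u = (p, q, r)"
      by (cases u)
    obtain i j k where "v = (i, j, k)"
      and "n dvd i" "n dvd j" "2 * n dvd 2 * k - i - j"
      using \<open>v \<in> heisenberg_relators n\<close> by (auto simp: heisenberg_relators_def)
    moreover have "2 * (r + k + q * i + (p * q - r) + (q + j) * - p) - (p + i + - p) - (q + j + - q)
        = (2 * k - i - j) + 2 * (i * q) - 2 * (j * p)"
      by (simp add: algebra_simps)
    ultimately show "u \<otimes>\<^bsub>heisenberg\<^esub> v \<otimes>\<^bsub>heisenberg\<^esub> inv\<^bsub>heisenberg\<^esub> u \<in> heisenberg_relators n"
      unfolding u heisenberg_relators_def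
      by (simp only: heisenberg_simps heisenberg_inv mem_Collect_eq split)
        (simp add: double_dvd_double_mult dvd_add dvd_diff)
  qed
qed

lemma heisenberg_commutator [simp]:
  "commutator heisenberg (i, j, k) (i', j', k') = (0, 0, j * i' - i * j')"
  by (simp add: commutator_def algebra_simps)

lemma heisenberg_pow [simp]:
  "(1, 0, 0) [^]\<^bsub>heisenberg\<^esub> (m::nat) = (int m, 0, 0)"
  "(0, 1, 0) [^]\<^bsub>heisenberg\<^esub> m = (0, int m, 0)"
  "(0, 0, k) [^]\<^bsub>heisenberg\<^esub> m = (0, 0, int m * k)"
proof -
  interpret group heisenberg
    by (rule group_heisenberg)
  show "(1, 0, 0) [^]\<^bsub>heisenberg\<^esub> m = (int m, 0, 0)"
    by (induction m) simp_all
  show "(0, 1, 0) [^]\<^bsub>heisenberg\<^esub> m = (0, int m, 0)"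
    by (induction m) simp_all
  show "(0, 0, k) [^]\<^bsub>heisenberg\<^esub> m = (0, 0, int m * k)"
    by (induction m) (simp_all add: algebra_simps)
qed

lemma heisenberg_quotient_model:
  assumes "\<gamma> \<ge> 1"
  defines "N \<equiv> heisenberg_relators (2 ^ \<gamma>)"
  defines "Q \<equiv> heisenberg Mod N"
    and "x \<equiv> N #>\<^bsub>heisenberg\<^esub> (1, 0, 0)" and "y \<equiv> N #>\<^bsub>heisenberg\<^esub> (0, 1, 0)"
  shows "group Q" "countable (carrier Q)" "x \<in> carrier Q" "y \<in> carrier Q"
    and "rels \<gamma> Q x y" "x [^]\<^bsub>Q\<^esub> ((2::nat) ^ \<gamma>) \<noteq> \<one>\<^bsub>Q\<^esub>"
proof -
  interpret N: normal N heisenberg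
    unfolding N_def by (rule normal_heisenberg_relators)
  define \<pi> where "\<pi> = r_coset heisenberg N"
  have carrier: "carrier Q = range \<pi>"
    by (simp add: Q_def \<pi>_def carrier_FactGroup)
  show Q: "group Q"
    unfolding Q_def by (rule N.factorgroup_is_group)
  show "countable (carrier Q)" "x \<in> carrier Q" "y \<in> carrier Q"
    by (simp_all add: carrier x_def y_def \<pi>_def)
  interpret \<pi>: group_hom heisenberg Q \<pi>
    using N.r_coset_hom_Mod Q group_heisenberg
    by (simp add: group_hom_def group_hom_axioms_def Q_def \<pi>_def)
  have one: "\<one>\<^bsub>Q\<^esub> = \<pi> (0, 0, 0)"
    using \<pi>.hom_one by simp
  have eq_iff: "\<pi> u = \<pi> v \<longleftrightarrow> u \<otimes>\<^bsub>heisenberg\<^esub> inv\<^bsub>heisenberg\<^esub> v \<in> N" for u v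
    unfolding \<pi>_def by (rule N.rcos_eq_iff[OF group_heisenberg]) simp_all
  obtain g where \<gamma>: "\<gamma> = Suc g"
    using assms(1) by (cases \<gamma>) auto
  show "rels \<gamma> Q x y"
    unfolding rels_def x_def y_def \<pi>_def[symmetric] one
    by (simp add: \<pi>.hom_commutator[symmetric] \<pi>.hom_nat_pow[symmetric] eq_iff
        N_def heisenberg_relators_def \<gamma>)
  show "x [^]\<^bsub>Q\<^esub> ((2::nat) ^ \<gamma>) \<noteq> \<one>\<^bsub>Q\<^esub>"
    unfolding x_def \<pi>_def[symmetric] one
    by (simp add: \<pi>.hom_nat_pow[symmetric] eq_iff N_def heisenberg_relators_def \<gamma>)
qed

lemma presented_by_rels_pow_ne_one:
  assumes "\<gamma> \<ge> 1" and G: "presented_by_rels \<gamma> G a b"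
  shows "a [^]\<^bsub>G\<^esub> ((2::nat) ^ \<gamma>) \<noteq> \<one>\<^bsub>G\<^esub>"
proof
  assume a: "a [^]\<^bsub>G\<^esub> ((2::nat) ^ \<gamma>) = \<one>\<^bsub>G\<^esub>"
  obtain Q :: "(int \<times> int \<times> int) set monoid" and x y
    where Q: "group Q" "countable (carrier Q)" "x \<in> carrier Q" "y \<in> carrier Q" "rels \<gamma> Q x y"
      and x: "x [^]\<^bsub>Q\<^esub> ((2::nat) ^ \<gamma>) \<noteq> \<one>\<^bsub>Q\<^esub>"
    using heisenberg_quotient_model[OF assms(1)] by blast
  obtain h where h: "h \<in> hom G Q" "h a = x"
    using presented_by_rels_hom_countable[OF G Q] by blast
  interpret h: group_hom G Q h
    using G Q(1) h(1) by (simp add: presented_by_rels_def group_hom_def group_hom_axioms_def)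
  have "x [^]\<^bsub>Q\<^esub> ((2::nat) ^ \<gamma>) = h (a [^]\<^bsub>G\<^esub> ((2::nat) ^ \<gamma>))"
    using G h(2) by (simp add: presented_by_rels_def h.hom_nat_pow)
  with a x show False
    by simp
qed

theorem theorem4p1:
  fixes \<gamma> :: nat
    and G :: "('a, 'b) monoid_scheme" and a b :: 'a
    and K :: "('k, 'c) monoid_scheme"
  assumes "\<gamma> \<ge> 1"
    and "presented_by_rels \<gamma> G a b"
  shows "\<not> capable_via K G"
proof
  assume "capable_via K G"
  moreover have "group G" "generate G {a, b} = carrier G" "a \<in> carrier G" "b \<in> carrier G"
    and "a [^]\<^bsub>G\<^esub> ((2::nat) ^ \<gamma>) = b [^]\<^bsub>G\<^esub> ((2::nat) ^ \<gamma>)"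
    using assms(2) by (simp_all add: presented_by_rels_def rels_def)
  ultimately have "a [^]\<^bsub>G\<^esub> ((2::nat) ^ \<gamma>) = \<one>\<^bsub>G\<^esub>"
    by (rule capable_via_two_generated_pow_eq_imp_one)
  with presented_by_rels_pow_ne_one[OF assms] show False
    by contradiction
qed

end
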